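(* Let $m\ge1$, $k\ge1$, and let $d_0,\dots,d_{k-1}\in S$ be the coefficients of $t^0,\dots,t^{k-1}$ of $\det X(t)$ for the generic $m\times m$ matrix $X(t)$. With respect to the graded reverse lexicographic order described below, $\{d_0,\dots,d_{k-1}\}$ is a Gröbner basis of $\mathcal I^{m,m}_{m,k}$. Moreover, writing an index $0\le q\le k-1$ as $q=\lambda m+\mu$ with $0\le\mu\le m-1$, the leading monomial of $d_q$ is $$\prod_{i=1}^{m-\mu}x^{(\lambda)}_{i,\,m-\mu+1-i}\ \cdot\prod_{i=m-\mu+1}^{m}x^{(\lambda+1)}_{i,\,2m-\mu+1-i},$$ and the leading monomials of distinct $d_q$ involve disjoint sets of variables.
   Context: Let $F$ be an algebraically closed field, $S=F[x^{(l)}_{i,j}:1\le i,j\le m,\ 0\le l\le k-1]$, and $X(t)$ the $m\times m$ matrix over $S[t]/(t^k)$ with entries $x_{i,j}(t)=\sum_{l=0}^{k-1}x^{(l)}_{i,j}t^l$; every element of $S[t]/(t^k)$ is uniquely $\sum_{l=0}^{k-1}c_lt^l$, $c_l\in S$. $\mathcal I^{m,m}_{m,k}$ is the ideal of $S$ generated by the coefficients of all powers of $t$ of $\det X(t)$. The variables are totally ordered by: $x^{(l)}_{i,j}>x^{(l')}_{i',j'}$ iff $l>l'$, or $l=l'$ and $(i,j)$ precedes $(i',j')$ lexicographically (i.e. $x^{(k-1)}_{1,1}>x^{(k-1)}_{1,2}>\dots>x^{(k-1)}_{m,m}>x^{(k-2)}_{1,1}>\dots>x^{(0)}_{m,m}$).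 The graded reverse lexicographic (grevlex) order on monomials with respect to this variable order is: monomials are first compared by total degree; for equal total degree, $\alpha>\beta$ iff, listing variables from largest to smallest and viewing exponent vectors in $\mathbb Z^{km^2}$, the rightmost (i.e. smallest-variable) nonzero entry of $\alpha-\beta$ is negative. *)

theory Defs
  imports "HOL-Library.Poly_Mapping" "HOL-Computational_Algebra.Polynomial"
          "HOL-Combinatorics.Permutations"
begin

text \<open>Variables x^(l)_(i,j) are encoded as triples (l, i, j).
  Monomials are finitely supported exponent vectors; polynomials in S = F[x]
  are finitely supported coefficient functions on monomials.\<close>

type_synonym var = "nat \<times> nat \<times> nat"
type_synonym monom = "var \<Rightarrow>\<^sub>0 nat"
type_synonym 'a mpoly = "monom \<Rightarrow>\<^sub>0 'a"

definition alg_closed_field :: "'a::field itself \<Rightarrow> bool" where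
  "alg_closed_field _ \<longleftrightarrow> (\<forall>p :: 'a poly. degree p > 0 \<longrightarrow> (\<exists>x. poly p x = 0))"

definition Xvar :: "nat \<Rightarrow> nat \<Rightarrow> nat \<Rightarrow> 'a::comm_ring_1 mpoly" where
  "Xvar l i j = Poly_Mapping.single (Poly_Mapping.single (l, i, j) 1) 1"

definition xt :: "nat \<Rightarrow> nat \<Rightarrow> nat \<Rightarrow> ('a::comm_ring_1 mpoly) poly" where
  "xt k i j = (\<Sum>l<k. monom (Xvar l i j) l)"

text \<open>det X(t) (Leibniz formula), computed in S[t]; reducing modulo t^k does not
  change the coefficients of t^0, ..., t^(k-1).\<close>
definition detX :: "nat \<Rightarrow> nat \<Rightarrow> ('a::comm_ring_1 mpoly) poly" where
  "detX m k = (\<Sum>p\<in>{p. p permutes {1..m}}. of_int (sign p) * (\<Prod>i\<in>{1..m}. xt k i (p i)))"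

definition dcoef :: "nat \<Rightarrow> nat \<Rightarrow> nat \<Rightarrow> 'a::comm_ring_1 mpoly" where
  "dcoef m k q = coeff (detX m k) q"

definition ideal_gen :: "'a::comm_ring_1 set \<Rightarrow> 'a set" where
  "ideal_gen G = {\<Sum>g\<in>F. c g * g | F c. finite F \<and> F \<subseteq> G}"

definition Ideal_mk :: "nat \<Rightarrow> nat \<Rightarrow> 'a::comm_ring_1 mpoly set" where
  "Ideal_mk m k = ideal_gen {dcoef m k q | q. q < k}"

definition var_gt :: "var \<Rightarrow> var \<Rightarrow> bool" where
  "var_gt v w = (case v of (l, i, j) \<Rightarrow> case w of (l', i', j') \<Rightarrow>
      l > l' \<or> (l = l' \<and> (i < i' \<or> (i = i' \<and> j < j'))))"

definition mdeg :: "monom \<Rightarrow> nat" where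
  "mdeg a = (\<Sum>v\<in>Poly_Mapping.keys a. Poly_Mapping.lookup a v)"

definition grevlex_gt :: "monom \<Rightarrow> monom \<Rightarrow> bool" where
  "grevlex_gt a b \<longleftrightarrow> mdeg a > mdeg b \<or>
     (mdeg a = mdeg b \<and> (\<exists>v. Poly_Mapping.lookup a v < Poly_Mapping.lookup b v \<and>
        (\<forall>w. var_gt v w \<longrightarrow> Poly_Mapping.lookup a w = Poly_Mapping.lookup b w)))"

definition lead_mon :: "'a::zero mpoly \<Rightarrow> monom" where
  "lead_mon f = (THE a. a \<in> Poly_Mapping.keys f \<and> (\<forall>b\<in>Poly_Mapping.keys f. b \<noteq> a \<longrightarrow> grevlex_gt a b))"

definition mon_dvd :: "monom \<Rightarrow> monom \<Rightarrow> bool" where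
  "mon_dvd a b \<longleftrightarrow> (\<forall>v. Poly_Mapping.lookup a v \<le> Poly_Mapping.lookup b v)"

definition is_groebner_basis :: "'a::comm_ring_1 mpoly set \<Rightarrow> 'a mpoly set \<Rightarrow> bool" where
  "is_groebner_basis G I \<longleftrightarrow> G \<subseteq> I \<and> 0 \<notin> G \<and>
     (\<forall>f\<in>I. f \<noteq> 0 \<longrightarrow> (\<exists>g\<in>G. mon_dvd (lead_mon g) (lead_mon f)))"

definition lm_formula :: "nat \<Rightarrow> nat \<Rightarrow> monom" where
  "lm_formula m q = (let lam = q div m; mu = q mod m in
     (\<Sum>i\<in>{1..m-mu}. Poly_Mapping.single (lam, i, m - mu + 1 - i) 1) +
     (\<Sum>i\<in>{m-mu+1..m}. Poly_Mapping.single (lam + 1, i, 2*m - mu + 1 - i) 1))"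

end

theory Submission
  imports Defs
begin

text \<open>By the Leibniz formula, d_q is a signed sum of the monomials
  x^(l 1)_(1, p 1) * ... * x^(l m)_(m, p m) over the permutations p of {1..m} and the levels l with
  l 1 + ... + l m = q, and different pairs (p, l) give different monomials. For q = lambda m + mu
  the grevlex-largest of them takes level lambda in the first m - mu rows and lambda + 1 in the
  others, with the anti-diagonal inside each of the two diagonal blocks. Each of its variables
  x^(l)_(i, j) satisfies q + i + j = m (l + 1) + 1, so the leading monomials of different d_q
  are coprime.

  Generators with pairwise coprime leading monomials form a Groebner basis (Buchberger's first
  criterion), proved directly: take a representation f = sum c_g g whose largest monomial d is
  as small as possible. If d cancelled, the syzygies g_0 g - g g_0 would give a representation
  with a smaller largest monomial; grevlex is well-founded on the monomials in finitely many
  variables, so d = lead_mon f, and d is a multiple of some lead_mon g.\<close>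

section \<open>The graded reverse lexicographic order\<close>

interpretation var_order: linorder "\<lambda>v w. v = w \<or> var_gt w v" "\<lambda>v w. var_gt w v"
  by unfold_locales (auto simp: var_gt_def split: prod.splits)

lemma var_gt_trans: "var_gt u v \<Longrightarrow> var_gt v w \<Longrightarrow> var_gt u w"
  by (auto simp: var_gt_def split: prod.splits)

lemma least_diff_var:
  assumes "a \<noteq> (b :: monom)"
  obtains u where "Poly_Mapping.lookup a u \<noteq> Poly_Mapping.lookup b u"
    and "\<And>w. var_gt u w \<Longrightarrow> Poly_Mapping.lookup a w = Poly_Mapping.lookup b w"
proof -
  define D where "D = {v. Poly_Mapping.lookup a v \<noteq> Poly_Mapping.lookup b v}"
  have fin: "finite D"
    unfolding D_def
    by (rule finite_subset[of _ "Poly_Mapping.keys a \<union> Poly_Mapping.keys b"]) (auto simp: in_keys_iff)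
  have ne: "D \<noteq> {}"
  proof
    assume "D = {}"
    then have "a = b"
      by (intro poly_mapping_eqI) (auto simp: D_def)
    with assms show False ..
  qed
  show ?thesis
  proof (rule that)
    show "Poly_Mapping.lookup a (var_order.Min D) \<noteq> Poly_Mapping.lookup b (var_order.Min D)"
      using var_order.Min_in[OF fin ne] by (simp add: D_def)
    fix w assume "var_gt (var_order.Min D) w"
    then have "w \<notin> D"
      using var_order.Min_le[OF fin, of w] var_order.less_not_sym by blast
    then show "Poly_Mapping.lookup a w = Poly_Mapping.lookup b w"
      by (simp add: D_def)
  qed
qed

lemma mdeg_superset:
  assumes "finite S" "Poly_Mapping.keys a \<subseteq> S"
  shows "mdeg a = (\<Sum>v\<in>S. Poly_Mapping.lookup a v)"
  unfolding mdeg_def using assms by (intro sum.mono_neutral_left) (auto simp: in_keys_iff)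

lemma mdeg_add [simp]: "mdeg (a + b) = mdeg a + mdeg b"
proof -
  let ?S = "Poly_Mapping.keys a \<union> Poly_Mapping.keys b"
  have "mdeg (a + b) = (\<Sum>v\<in>?S. Poly_Mapping.lookup (a + b) v)"
    using keys_add[of a b] by (intro mdeg_superset) auto
  also have "\<dots> = mdeg a + mdeg b"
    by (simp add: lookup_add sum.distrib mdeg_superset[of ?S])
  finally show ?thesis .
qed

lemma mdeg_zero [simp]: "mdeg 0 = 0"
  by (simp add: mdeg_def)

lemma mdeg_single [simp]: "mdeg (Poly_Mapping.single v n) = n"
  by (simp add: mdeg_def)

lemma mdeg_sum: "mdeg (sum f A) = (\<Sum>i\<in>A. mdeg (f i))"
  by (induction A rule: infinite_finite_induct) auto

lemma grevlex_gt_irrefl: "\<not> grevlex_gt a a"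
  by (auto simp: grevlex_gt_def)

lemma grevlex_gt_mdeg: "grevlex_gt a b \<Longrightarrow> mdeg b \<le> mdeg a"
  by (auto simp: grevlex_gt_def)

lemma grevlex_gtI:
  assumes "mdeg a = mdeg b" "Poly_Mapping.lookup a v < Poly_Mapping.lookup b v"
    and "\<And>w. var_gt v w \<Longrightarrow> Poly_Mapping.lookup a w = Poly_Mapping.lookup b w"
  shows "grevlex_gt a b"
  using assms unfolding grevlex_gt_def by blast

lemma grevlex_gt_trans:
  assumes ab: "grevlex_gt a b" and bc: "grevlex_gt b c"
  shows "grevlex_gt a c"
proof (cases "mdeg a = mdeg b \<and> mdeg b = mdeg c")
  case True
  obtain v1 where v1: "Poly_Mapping.lookup a v1 < Poly_Mapping.lookup b v1"
    "\<And>w. var_gt v1 w \<Longrightarrow> Poly_Mapping.lookup a w = Poly_Mapping.lookup b w"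
    using ab True by (auto simp: grevlex_gt_def)
  obtain v2 where v2: "Poly_Mapping.lookup b v2 < Poly_Mapping.lookup c v2"
    "\<And>w. var_gt v2 w \<Longrightarrow> Poly_Mapping.lookup b w = Poly_Mapping.lookup c w"
    using bc True by (auto simp: grevlex_gt_def)
  obtain u where u1: "u = v1 \<or> var_gt v1 u" and u2: "u = v2 \<or> var_gt v2 u"
    and u12: "u = v1 \<or> u = v2"
    using var_order.linear by blast
  show ?thesis
  proof (rule grevlex_gtI)
    show "mdeg a = mdeg c"
      using True by simp
    have "Poly_Mapping.lookup a u \<le> Poly_Mapping.lookup b u"
      using u1 v1(1) v1(2)[of u] by (cases "u = v1") auto
    moreover have "Poly_Mapping.lookup b u \<le> Poly_Mapping.lookup c u"
      using u2 v2(1) v2(2)[of u] by (cases "u = v2") auto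
    moreover have "Poly_Mapping.lookup a u < Poly_Mapping.lookup b u \<or> Poly_Mapping.lookup b u < Poly_Mapping.lookup c u"
      using u12 v1(1) v2(1) by blast
    ultimately show "Poly_Mapping.lookup a u < Poly_Mapping.lookup c u"
      by linarith
    fix w assume "var_gt u w"
    then have "var_gt v1 w" "var_gt v2 w"
      using u1 u2 var_gt_trans by blast+
    then show "Poly_Mapping.lookup a w = Poly_Mapping.lookup c w"
      using v1(2) v2(2) by simp
  qed
qed (use ab bc in \<open>auto simp: grevlex_gt_def\<close>)

lemma grevlex_gt_total:
  assumes "a \<noteq> b"
  shows "grevlex_gt a b \<or> grevlex_gt b a"
proof (cases "mdeg a = mdeg b")
  case True
  obtain u where u: "Poly_Mapping.lookup a u \<noteq> Poly_Mapping.lookup b u"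
    and below: "\<And>w. var_gt u w \<Longrightarrow> Poly_Mapping.lookup a w = Poly_Mapping.lookup b w"
    using least_diff_var[OF assms] by blast
  from u consider "Poly_Mapping.lookup a u < Poly_Mapping.lookup b u"
    | "Poly_Mapping.lookup b u < Poly_Mapping.lookup a u"
    by linarith
  then show ?thesis
  proof cases
    case 1
    then show ?thesis
      using grevlex_gtI[OF True 1 below] by blast
  next
    case 2
    then show ?thesis
      using grevlex_gtI[OF True[symmetric] 2 below[symmetric]] by blast
  qed
qed (auto simp: grevlex_gt_def)

definition grevlex_ge :: "monom \<Rightarrow> monom \<Rightarrow> bool" where
  "grevlex_ge a b \<longleftrightarrow> a = b \<or> grevlex_gt a b"

interpretation grevlex: linorder "\<lambda>a b. grevlex_ge b a" "\<lambda>a b. grevlex_gt b a"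
proof (rule linorder_strictI[OF order_strictI])
  show "grevlex_ge b a \<longleftrightarrow> grevlex_gt b a \<or> a = b" for a b
    by (auto simp: grevlex_ge_def)
  show "grevlex_gt b a \<Longrightarrow> \<not> grevlex_gt a b" for a b
    using grevlex_gt_trans grevlex_gt_irrefl by blast
  show "\<not> grevlex_gt a a" for a
    by (rule grevlex_gt_irrefl)
  show "grevlex_gt b a \<Longrightarrow> grevlex_gt c b \<Longrightarrow> grevlex_gt c a" for a b c
    using grevlex_gt_trans by blast
  show "grevlex_gt b a \<or> a = b \<or> grevlex_gt a b" for a b
    using grevlex_gt_total by blast
qed

lemma grevlex_gt_add_right:
  assumes "grevlex_gt a b"
  shows "grevlex_gt (a + c) (b + c)"
proof (cases "mdeg b < mdeg a")
  case False
  then obtain v where "mdeg a = mdeg b" "Poly_Mapping.lookup a v < Poly_Mapping.lookup b v"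
    "\<And>w. var_gt v w \<Longrightarrow> Poly_Mapping.lookup a w = Poly_Mapping.lookup b w"
    using assms by (auto simp: grevlex_gt_def)
  then show ?thesis
    by (intro grevlex_gtI[of _ _ v]) (simp_all add: lookup_add)
qed (simp add: grevlex_gt_def)

lemma grevlex_gt_add_left: "grevlex_gt c d \<Longrightarrow> grevlex_gt (b + c) (b + d)"
  using grevlex_gt_add_right[of c d b] by (simp add: add.commute)

lemma grevlex_ge_add:
  assumes "grevlex_ge a b" "grevlex_ge c d"
  shows "grevlex_ge (a + c) (b + d)"
proof -
  have "grevlex_ge (b + c) (b + d)" "grevlex_ge (a + c) (b + c)"
    using assms grevlex_gt_add_right grevlex_gt_add_left by (auto simp: grevlex_ge_def)
  then show ?thesis
    by (rule grevlex.order_trans)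
qed

lemma grevlex_gt_add:
  assumes "grevlex_ge a b" "grevlex_ge c d" "a \<noteq> b \<or> c \<noteq> d"
  shows "grevlex_gt (a + c) (b + d)"
proof -
  have ge: "grevlex_ge (b + c) (b + d)" "grevlex_ge (a + c) (b + c)"
    using assms grevlex_gt_add_right grevlex_gt_add_left by (auto simp: grevlex_ge_def)
  have "grevlex_gt (a + c) (b + c) \<or> grevlex_gt (b + c) (b + d)"
    using assms grevlex_gt_add_right grevlex_gt_add_left by (auto simp: grevlex_ge_def)
  then show ?thesis
  proof
    assume "grevlex_gt (a + c) (b + c)"
    with ge(1) show ?thesis
      by (rule grevlex.le_less_trans)
  next
    assume "grevlex_gt (b + c) (b + d)"
    then show ?thesis
      using ge(2) by (rule grevlex.less_le_trans)
  qed
qed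

section \<open>Leading monomials\<close>

lemma lead_mon_eqI:
  assumes "a \<in> Poly_Mapping.keys f" "\<And>b. b \<in> Poly_Mapping.keys f \<Longrightarrow> grevlex_ge a b"
  shows "lead_mon f = a"
  unfolding lead_mon_def
proof (rule the_equality)
  fix x assume x: "x \<in> Poly_Mapping.keys f \<and> (\<forall>b\<in>Poly_Mapping.keys f. b \<noteq> x \<longrightarrow> grevlex_gt x b)"
  then show "x = a"
    using assms grevlex_gt_irrefl grevlex_gt_trans unfolding grevlex_ge_def by metis
qed (use assms in \<open>auto simp: grevlex_ge_def\<close>)

lemma lead_mon_eq_Max:
  assumes "f \<noteq> 0"
  shows "lead_mon f = grevlex.Max (Poly_Mapping.keys f)"
  using assms by (intro lead_mon_eqI grevlex.Max_in grevlex.Max_ge) auto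

lemma lead_mon_in_keys: "f \<noteq> 0 \<Longrightarrow> lead_mon f \<in> Poly_Mapping.keys f"
  by (simp add: lead_mon_eq_Max)

lemma lead_mon_ge:
  assumes "b \<in> Poly_Mapping.keys f"
  shows "grevlex_ge (lead_mon f) b"
proof -
  have "f \<noteq> 0"
    using assms by auto
  then show ?thesis
    using grevlex.Max_ge[of "Poly_Mapping.keys f" b] assms by (simp add: lead_mon_eq_Max)
qed

lemma lead_mon_single: "c \<noteq> 0 \<Longrightarrow> lead_mon (Poly_Mapping.single a c) = a"
  by (intro lead_mon_eqI) (auto simp: grevlex_ge_def)

definition lead_coef :: "'a::zero mpoly \<Rightarrow> 'a" where
  "lead_coef f = Poly_Mapping.lookup f (lead_mon f)"

lemma lead_coef_nonzero: "f \<noteq> 0 \<Longrightarrow> lead_coef f \<noteq> 0"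
  using lead_mon_in_keys by (auto simp: lead_coef_def in_keys_iff)

lemma lead_coef_single: "lead_coef (Poly_Mapping.single a c) = c"
  by (cases "c = 0") (simp_all add: lead_coef_def lead_mon_single)

definition mons_le :: "monom \<Rightarrow> 'a::zero mpoly \<Rightarrow> bool" where
  "mons_le d p \<longleftrightarrow> (\<forall>a\<in>Poly_Mapping.keys p. grevlex_ge d a)"

lemma mons_le_lead_mon: "mons_le (lead_mon p) p"
  by (simp add: mons_le_def lead_mon_ge)

lemma lead_mon_eq_if_mons_le:
  "mons_le d p \<Longrightarrow> Poly_Mapping.lookup p d \<noteq> 0 \<Longrightarrow> lead_mon p = d"
  by (intro lead_mon_eqI) (auto simp: mons_le_def in_keys_iff)

lemma mons_le_strict:
  "mons_le d p \<Longrightarrow> Poly_Mapping.lookup p d = 0 \<Longrightarrow> a \<in> Poly_Mapping.keys p \<Longrightarrow> grevlex_gt d a"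
  by (auto simp: mons_le_def grevlex_ge_def in_keys_iff)

lemma mons_le_add: "mons_le d p \<Longrightarrow> mons_le d q \<Longrightarrow> mons_le d (p + q)"
  using keys_add[of p q] by (auto simp: mons_le_def)

lemma mons_le_diff:
  fixes p q :: "'a::ab_group_add mpoly"
  shows "mons_le d p \<Longrightarrow> mons_le d q \<Longrightarrow> mons_le d (p - q)"
  using keys_diff[of p q] by (auto simp: mons_le_def)

lemma mons_le_sum: "(\<And>i. i \<in> A \<Longrightarrow> mons_le d (f i)) \<Longrightarrow> mons_le d (sum f A)"
  using keys_sum[of f A] by (auto simp: mons_le_def)

lemma mons_le_mult:
  fixes p q :: "'a::comm_semiring_0 mpoly"
  assumes "mons_le d p" "mons_le e q"
  shows "mons_le (d + e) (p * q)"
  using assms keys_mult[of p q] grevlex_ge_add by (fastforce simp: mons_le_def)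

lemma poly_mapping_eq_sum_single:
  "f = (\<Sum>a\<in>Poly_Mapping.keys f. Poly_Mapping.single a (Poly_Mapping.lookup f a))"
  by (rule poly_mapping_eqI) (simp add: lookup_sum lookup_single when_def sum.delta' in_keys_iff)

lemma lookup_mult_keys:
  fixes p q :: "'a::comm_semiring_0 mpoly"
  shows "Poly_Mapping.lookup (p * q) x =
    (\<Sum>a\<in>Poly_Mapping.keys p. \<Sum>b\<in>Poly_Mapping.keys q.
        if a + b = x then Poly_Mapping.lookup p a * Poly_Mapping.lookup q b else 0)"
proof -
  have "p * q = (\<Sum>a\<in>Poly_Mapping.keys p. Poly_Mapping.single a (Poly_Mapping.lookup p a)) *
      (\<Sum>b\<in>Poly_Mapping.keys q. Poly_Mapping.single b (Poly_Mapping.lookup q b))"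
    by (intro arg_cong2[where f = "(*)"] poly_mapping_eq_sum_single)
  also have "\<dots> = (\<Sum>a\<in>Poly_Mapping.keys p. \<Sum>b\<in>Poly_Mapping.keys q.
      Poly_Mapping.single (a + b) (Poly_Mapping.lookup p a * Poly_Mapping.lookup q b))"
    by (simp add: sum_distrib_left sum_distrib_right mult_single) (rule sum.swap)
  finally show ?thesis
    by (simp add: lookup_sum lookup_single when_def)
qed

lemma lookup_mult_mons_le:
  fixes p q :: "'a::comm_semiring_0 mpoly"
  assumes p: "mons_le d p" and q: "mons_le e q"
  shows "Poly_Mapping.lookup (p * q) (d + e) = Poly_Mapping.lookup p d * Poly_Mapping.lookup q e"
proof -
  have sum_eq: "a + b = d + e \<longleftrightarrow> a = d \<and> b = e"
    if "a \<in> Poly_Mapping.keys p" "b \<in> Poly_Mapping.keys q" for a b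
  proof
    assume sum: "a + b = d + e"
    show "a = d \<and> b = e"
    proof (rule ccontr)
      assume "\<not> (a = d \<and> b = e)"
      then have "grevlex_gt (d + e) (a + b)"
        using p q that by (intro grevlex_gt_add) (auto simp: mons_le_def)
      then show False
        using sum grevlex_gt_irrefl by simp
    qed
  qed simp
  have "Poly_Mapping.lookup (p * q) (d + e) =
      (\<Sum>a\<in>Poly_Mapping.keys p. \<Sum>b\<in>Poly_Mapping.keys q.
        if a = d then if b = e then Poly_Mapping.lookup p a * Poly_Mapping.lookup q b else 0 else 0)"
    unfolding lookup_mult_keys by (intro sum.cong refl) (simp add: sum_eq)
  also have "\<dots> = (\<Sum>a\<in>Poly_Mapping.keys p. if a = d then Poly_Mapping.lookup p a * Poly_Mapping.lookup q e else 0)"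
    by (intro sum.cong refl) (auto simp: sum.delta' in_keys_iff)
  also have "\<dots> = Poly_Mapping.lookup p d * Poly_Mapping.lookup q e"
    by (auto simp: sum.delta' in_keys_iff)
  finally show ?thesis .
qed

lemma lead_mon_mult:
  fixes p q :: "'a::idom mpoly"
  assumes "p \<noteq> 0" "q \<noteq> 0"
  shows "lead_mon (p * q) = lead_mon p + lead_mon q"
    and "lead_coef (p * q) = lead_coef p * lead_coef q"
    and "p * q \<noteq> 0" \<comment> \<open>not automatic: \<open>var\<close> carries no linear order, so \<open>mpoly\<close> is no \<open>idom\<close>\<close>
proof -
  have lookup_eq: "Poly_Mapping.lookup (p * q) (lead_mon p + lead_mon q) = lead_coef p * lead_coef q"
    unfolding lead_coef_def by (intro lookup_mult_mons_le mons_le_lead_mon)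
  moreover have nz: "lead_coef p * lead_coef q \<noteq> 0"
    using assms by (simp add: lead_coef_nonzero)
  ultimately show "p * q \<noteq> 0"
    by auto
  from lookup_eq nz show lm: "lead_mon (p * q) = lead_mon p + lead_mon q"
    by (intro lead_mon_eq_if_mons_le mons_le_mult mons_le_lead_mon) simp
  show "lead_coef (p * q) = lead_coef p * lead_coef q"
    unfolding lead_coef_def lm using lookup_eq by (simp add: lead_coef_def)
qed

lemma lead_mon_factor_dvd:
  fixes c g :: "'a::idom mpoly"
  assumes "mons_le d (c * g)" "Poly_Mapping.lookup (c * g) d \<noteq> 0"
  shows "mon_dvd (lead_mon g) d"
proof -
  have "c \<noteq> 0" "g \<noteq> 0"
    using assms(2) by auto
  moreover have "lead_mon (c * g) = d"
    using assms by (rule lead_mon_eq_if_mons_le)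
  ultimately have "d = lead_mon c + lead_mon g"
    by (simp add: lead_mon_mult)
  then show ?thesis
    by (simp add: mon_dvd_def lookup_add)
qed

lemma max_mon_exists:
  assumes "finite F" "(\<Sum>g\<in>F. p g) \<noteq> 0"
  obtains d g where "g \<in> F" "d \<in> Poly_Mapping.keys (p g)" "\<And>h. h \<in> F \<Longrightarrow> mons_le d (p h)"
proof -
  define K where "K = (\<Union>g\<in>F. Poly_Mapping.keys (p g))"
  have "Poly_Mapping.keys (\<Sum>g\<in>F. p g) \<subseteq> K"
    unfolding K_def by (rule keys_sum)
  moreover have "Poly_Mapping.keys (\<Sum>g\<in>F. p g) \<noteq> {}"
    using assms(2) by simp
  ultimately have "K \<noteq> {}"
    by blast
  have "finite K"
    using assms(1) by (simp add: K_def)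
  from \<open>K \<noteq> {}\<close> \<open>finite K\<close> obtain g where "g \<in> F" "grevlex.Max K \<in> Poly_Mapping.keys (p g)"
    using grevlex.Max_in unfolding K_def by blast
  moreover have "mons_le (grevlex.Max K) (p h)" if "h \<in> F" for h
    using \<open>finite K\<close> that unfolding mons_le_def K_def by (blast intro: grevlex.Max_ge)
  ultimately show ?thesis
    by (rule that)
qed

section \<open>Pairwise coprime leading monomials give a Groebner basis\<close>

lemma keys_add_monom: "Poly_Mapping.keys (a + b :: monom) = Poly_Mapping.keys a \<union> Poly_Mapping.keys b"
  by (auto simp: in_keys_iff lookup_add)

lemma coprime_mon_dvd_diff_add:
  assumes "mon_dvd a d" "mon_dvd b d" "Poly_Mapping.keys a \<inter> Poly_Mapping.keys b = {}"
  shows "(d - (a + b)) + (a + b) = d"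
proof (rule poly_mapping_eqI)
  fix v
  have "Poly_Mapping.lookup a v \<le> Poly_Mapping.lookup d v" "Poly_Mapping.lookup b v \<le> Poly_Mapping.lookup d v"
    using assms(1,2) unfolding mon_dvd_def by blast+
  moreover have "Poly_Mapping.lookup a v = 0 \<or> Poly_Mapping.lookup b v = 0"
    using assms(3) by (auto simp: in_keys_iff)
  ultimately have "Poly_Mapping.lookup a v + Poly_Mapping.lookup b v \<le> Poly_Mapping.lookup d v"
    by auto
  then show "Poly_Mapping.lookup (d - (a + b) + (a + b)) v = Poly_Mapping.lookup d v"
    by (simp add: lookup_add lookup_minus)
qed

definition vars :: "'a::zero mpoly \<Rightarrow> var set" where
  "vars p = (\<Union>a\<in>Poly_Mapping.keys p. Poly_Mapping.keys a)"

lemma vars_add_subset: "vars p \<subseteq> V \<Longrightarrow> vars q \<subseteq> V \<Longrightarrow> vars (p + q) \<subseteq> V"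
  unfolding vars_def using keys_add[of p q] by blast

lemma vars_diff_subset:
  fixes p q :: "'a::ab_group_add mpoly"
  shows "vars p \<subseteq> V \<Longrightarrow> vars q \<subseteq> V \<Longrightarrow> vars (p - q) \<subseteq> V"
  unfolding vars_def using keys_diff[of p q] by blast

lemma vars_sum_subset: "(\<And>i. i \<in> A \<Longrightarrow> vars (f i) \<subseteq> V) \<Longrightarrow> vars (sum f A) \<subseteq> V"
  unfolding vars_def using keys_sum[of f A] by blast

lemma vars_mult_subset:
  fixes p q :: "'a::comm_semiring_0 mpoly"
  assumes "vars p \<subseteq> V" "vars q \<subseteq> V"
  shows "vars (p * q) \<subseteq> V"
proof -
  have "vars (p * q) \<subseteq> vars p \<union> vars q"
    using keys_mult[of p q] by (fastforce simp: vars_def keys_add_monom)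
  with assms show ?thesis
    by blast
qed

lemma finite_vars [simp]: "finite (vars p)"
  by (simp add: vars_def)

lemma vars_single: "vars (Poly_Mapping.single a c) \<subseteq> Poly_Mapping.keys a"
  by (simp add: vars_def)

lemma finite_mons_bounded:
  assumes "finite V"
  shows "finite {a::monom. Poly_Mapping.keys a \<subseteq> V \<and> mdeg a \<le> D}"
proof -
  let ?S = "{f::var \<Rightarrow> nat. \<forall>x. (x \<in> V \<longrightarrow> f x \<in> {..D}) \<and> (x \<notin> V \<longrightarrow> f x = 0)}"
  have "{a::monom. Poly_Mapping.keys a \<subseteq> V \<and> mdeg a \<le> D} \<subseteq> Poly_Mapping.lookup -` ?S"
  proof (intro subsetI)
    fix a :: monom
    assume "a \<in> {a. Poly_Mapping.keys a \<subseteq> V \<and> mdeg a \<le> D}"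
    then have a: "Poly_Mapping.keys a \<subseteq> V" "mdeg a \<le> D"
      by simp_all
    have "Poly_Mapping.lookup a x \<le> D" for x
    proof (cases "x \<in> Poly_Mapping.keys a")
      case True
      then have "Poly_Mapping.lookup a x \<le> mdeg a"
        unfolding mdeg_def by (intro member_le_sum) auto
      then show ?thesis
        using a(2) by simp
    qed (simp add: in_keys_iff)
    then show "a \<in> Poly_Mapping.lookup -` ?S"
      using a(1) by (auto simp: in_keys_iff)
  qed
  moreover have "finite (Poly_Mapping.lookup -` ?S)"
    using assms by (intro finite_vimageI finite_set_of_finite_funs) (auto simp: inj_def poly_mapping_eqI)
  ultimately show ?thesis
    by (rule finite_subset)
qed

text \<open>Grevlex is not well-founded on all monomials (\<open>x\<^sub>1\<^sub>1 > x\<^sub>1\<^sub>2 > \<dots>\<close>), but it is once the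
  variables are confined to a finite set, since it never increases the degree.\<close>
lemma wf_grevlex_vars:
  assumes "finite V"
  shows "wf {(a, b). Poly_Mapping.keys a \<subseteq> V \<and> grevlex_gt b a}"
proof -
  define below where "below b = {a. Poly_Mapping.keys a \<subseteq> V \<and> mdeg a \<le> mdeg b \<and> grevlex_gt b a}" for b
  have "card (below a) < card (below b)" if "Poly_Mapping.keys a \<subseteq> V" "grevlex_gt b a" for a b
  proof (rule psubset_card_mono)
    show "finite (below b)"
      using finite_mons_bounded[OF assms, of "mdeg b"] by (rule rev_finite_subset) (auto simp: below_def)
    have "below a \<subseteq> below b"
      using that grevlex_gt_trans grevlex_gt_mdeg unfolding below_def by fastforce
    moreover have "a \<in> below b - below a"
      using that grevlex_gt_mdeg grevlex_gt_irrefl unfolding below_def by blast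
    ultimately show "below a \<subset> below b"
      by blast
  qed
  then show ?thesis
    by (intro wf_subset[OF wf_measure[of "\<lambda>b. card (below b)"]]) auto
qed

lemma cancel_top_term:
  fixes c g g0 :: "'a::field mpoly"
  assumes g0: "g0 \<noteq> 0" "mon_dvd (lead_mon g0) d"
    and cop: "Poly_Mapping.keys (lead_mon g0) \<inter> Poly_Mapping.keys (lead_mon g) = {}"
    and bnd: "mons_le d (c * g)"
  obtains t where "mons_le d (t * g0 * g)"
    and "Poly_Mapping.lookup (t * g0 * g) d = Poly_Mapping.lookup (c * g) d"
    and "vars t \<subseteq> Poly_Mapping.keys d"
proof (cases "Poly_Mapping.lookup (c * g) d = 0")
  case True
  then show ?thesis
    using that[of 0] by (simp add: mons_le_def vars_def)
next
  case False
  then have "g \<noteq> 0"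
    by auto
  \<comment> \<open>\<open>lead_mon g\<^sub>0\<close> and \<open>lead_mon g\<close> both divide \<open>d\<close> and are coprime, so their product does\<close>
  define N where "N = d - (lead_mon g0 + lead_mon g)"
  have N: "N + (lead_mon g0 + lead_mon g) = d"
    unfolding N_def using g0(2) lead_mon_factor_dvd[OF bnd False] cop
    by (rule coprime_mon_dvd_diff_add)
  define coef where "coef = Poly_Mapping.lookup (c * g) d / (lead_coef g0 * lead_coef g)"
  define t where "t = Poly_Mapping.single N coef"
  have "lead_coef g0 * lead_coef g \<noteq> 0"
    using g0(1) \<open>g \<noteq> 0\<close> by (simp add: lead_coef_nonzero)
  then have coef: "coef \<noteq> 0" "coef * (lead_coef g0 * lead_coef g) = Poly_Mapping.lookup (c * g) d"
    using False by (simp_all add: coef_def)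
  then have t: "lead_mon t = N" "lead_coef t * (lead_coef g0 * lead_coef g) = Poly_Mapping.lookup (c * g) d"
    by (simp_all add: t_def lead_mon_single lead_coef_single)
  moreover have "t \<noteq> 0"
    using coef(1) lookup_single_eq[of N coef] unfolding t_def by force
  have "t * g0 \<noteq> 0"
    using \<open>t \<noteq> 0\<close> g0(1) by (rule lead_mon_mult(3))
  have lm: "lead_mon (t * g0 * g) = d"
    using lead_mon_mult(1)[OF \<open>t * g0 \<noteq> 0\<close> \<open>g \<noteq> 0\<close>] lead_mon_mult(1)[OF \<open>t \<noteq> 0\<close> g0(1)] t(1) N
    by (simp add: add.assoc)
  have lc: "lead_coef (t * g0 * g) = Poly_Mapping.lookup (c * g) d"
    using lead_mon_mult(2)[OF \<open>t * g0 \<noteq> 0\<close> \<open>g \<noteq> 0\<close>] lead_mon_mult(2)[OF \<open>t \<noteq> 0\<close> g0(1)] t(2)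
    by (simp add: mult.assoc)
  show ?thesis
  proof (rule that)
    show "mons_le d (t * g0 * g)"
      using mons_le_lead_mon[of "t * g0 * g"] lm by simp
    show "Poly_Mapping.lookup (t * g0 * g) d = Poly_Mapping.lookup (c * g) d"
      using lc lm by (simp add: lead_coef_def)
    have "Poly_Mapping.keys N \<subseteq> Poly_Mapping.keys d"
      using N keys_add_monom by blast
    then show "vars t \<subseteq> Poly_Mapping.keys d"
      using vars_single unfolding t_def by blast
  qed
qed

lemma cancel_top_terms:
  fixes F :: "'a::field mpoly set" and c :: "'a mpoly \<Rightarrow> 'a mpoly"
  assumes g0: "g0 \<noteq> 0" "mon_dvd (lead_mon g0) d"
    and cop: "\<And>g. g \<in> F \<Longrightarrow> g \<noteq> g0 \<Longrightarrow>
      Poly_Mapping.keys (lead_mon g0) \<inter> Poly_Mapping.keys (lead_mon g) = {}"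
    and bnd: "\<And>g. g \<in> F \<Longrightarrow> mons_le d (c g * g)"
  obtains t where "\<And>g. g \<in> F - {g0} \<Longrightarrow> mons_le d (t g * g0 * g)"
    and "\<And>g. g \<in> F - {g0} \<Longrightarrow> Poly_Mapping.lookup (t g * g0 * g) d = Poly_Mapping.lookup (c g * g) d"
    and "\<And>g. g \<in> F - {g0} \<Longrightarrow> vars (t g) \<subseteq> Poly_Mapping.keys d"
proof -
  have "\<forall>g\<in>F - {g0}. \<exists>t. mons_le d (t * g0 * g) \<and>
      Poly_Mapping.lookup (t * g0 * g) d = Poly_Mapping.lookup (c g * g) d \<and> vars t \<subseteq> Poly_Mapping.keys d"
  proof
    fix g assume "g \<in> F - {g0}"
    then have "g \<in> F" "g \<noteq> g0"
      by auto
    from cancel_top_term[OF g0 cop[OF this] bnd[OF \<open>g \<in> F\<close>]]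
    show "\<exists>t. mons_le d (t * g0 * g) \<and>
      Poly_Mapping.lookup (t * g0 * g) d = Poly_Mapping.lookup (c g * g) d \<and> vars t \<subseteq> Poly_Mapping.keys d"
      by blast
  qed
  then obtain t where "\<forall>g\<in>F - {g0}. mons_le d (t g * g0 * g) \<and>
      Poly_Mapping.lookup (t g * g0 * g) d = Poly_Mapping.lookup (c g * g) d \<and> vars (t g) \<subseteq> Poly_Mapping.keys d"
    by (auto dest: bchoice)
  then show ?thesis
    using that by blast
qed

lemma sum_exchange:
  fixes F :: "'a::comm_ring_1 set" and c t :: "'a \<Rightarrow> 'a"
  assumes "finite F" "g0 \<in> F"
  shows "(\<Sum>g\<in>F. (if g = g0 then c g0 + (\<Sum>h\<in>F - {g0}. t h * h) else c g - t g * g0) * g) =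
    (\<Sum>g\<in>F. c g * g)"
    (is "(\<Sum>g\<in>F. ?c' g * g) = _")
proof -
  have "(\<Sum>g\<in>F. ?c' g * g) = ?c' g0 * g0 + (\<Sum>g\<in>F - {g0}. ?c' g * g)"
    using assms by (simp add: sum.remove)
  also have "(\<Sum>g\<in>F - {g0}. ?c' g * g) = (\<Sum>g\<in>F - {g0}. (c g - t g * g0) * g)"
    by (rule sum.cong) auto
  also have "?c' g0 * g0 + \<dots> = c g0 * g0 + (\<Sum>g\<in>F - {g0}. c g * g)"
    by (simp add: algebra_simps sum_distrib_left sum_distrib_right sum_subtractf)
  also have "\<dots> = (\<Sum>g\<in>F. c g * g)"
    using assms by (simp add: sum.remove)
  finally show ?thesis .
qed

text \<open>The syzygies \<open>g\<^sub>0 * g - g * g\<^sub>0 = 0\<close> move every occurrence of the top monomial \<open>d\<close>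
  onto the single generator \<open>g\<^sub>0\<close>; if \<open>d\<close> cancels in the sum, it then occurs nowhere.\<close>
lemma reduce_top_mon_at:
  fixes F :: "'a::field mpoly set" and c :: "'a mpoly \<Rightarrow> 'a mpoly"
  assumes fin: "finite F" and g0: "g0 \<in> F" "g0 \<noteq> 0" "mon_dvd (lead_mon g0) d"
    and cop: "\<And>g. g \<in> F \<Longrightarrow> g \<noteq> g0 \<Longrightarrow>
      Poly_Mapping.keys (lead_mon g0) \<inter> Poly_Mapping.keys (lead_mon g) = {}"
    and bnd: "\<And>g. g \<in> F \<Longrightarrow> mons_le d (c g * g)"
    and top: "Poly_Mapping.lookup (\<Sum>g\<in>F. c g * g) d = 0"
    and V: "Poly_Mapping.keys d \<subseteq> V" "\<And>g. g \<in> F \<Longrightarrow> vars g \<subseteq> V"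
      "\<And>g. g \<in> F \<Longrightarrow> vars (c g * g) \<subseteq> V"
  obtains c' where "(\<Sum>g\<in>F. c' g * g) = (\<Sum>g\<in>F. c g * g)"
    and "\<And>g a. g \<in> F \<Longrightarrow> a \<in> Poly_Mapping.keys (c' g * g) \<Longrightarrow> grevlex_gt d a"
    and "\<And>g. g \<in> F \<Longrightarrow> vars (c' g * g) \<subseteq> V"
proof -
  obtain t where t: "\<And>g. g \<in> F - {g0} \<Longrightarrow> mons_le d (t g * g0 * g)"
      "\<And>g. g \<in> F - {g0} \<Longrightarrow> Poly_Mapping.lookup (t g * g0 * g) d = Poly_Mapping.lookup (c g * g) d"
      "\<And>g. g \<in> F - {g0} \<Longrightarrow> vars (t g) \<subseteq> Poly_Mapping.keys d"
    using cancel_top_terms[OF g0(2,3) cop bnd] by blast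
  define c' where "c' g = (if g = g0 then c g0 + (\<Sum>h\<in>F - {g0}. t h * h) else c g - t g * g0)" for g
  have sum_eq: "(\<Sum>g\<in>F. c' g * g) = (\<Sum>g\<in>F. c g * g)"
    unfolding c'_def using fin g0(1) by (rule sum_exchange)
  have "(\<Sum>h\<in>F - {g0}. t h * h) * g0 = (\<Sum>h\<in>F - {g0}. t h * g0 * h)"
    unfolding sum_distrib_right by (rule sum.cong) (simp_all add: ac_simps)
  then have c'_g0: "c' g0 * g0 = c g0 * g0 + (\<Sum>h\<in>F - {g0}. t h * g0 * h)"
    by (simp add: c'_def distrib_right)
  have c'_other: "c' g * g = c g * g - t g * g0 * g" if "g \<noteq> g0" for g
    using that by (simp add: c'_def algebra_simps)
  have zero: "Poly_Mapping.lookup (c' g * g) d = 0" if "g \<in> F - {g0}" for g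
    using that t(2) by (simp add: c'_other lookup_minus)
  moreover have "Poly_Mapping.lookup (c' g0 * g0) d + (\<Sum>g\<in>F - {g0}. Poly_Mapping.lookup (c' g * g) d) = 0"
    using top fin g0(1) by (simp flip: sum_eq add: lookup_sum lookup_add sum.remove)
  ultimately have zero0: "Poly_Mapping.lookup (c' g0 * g0) d = 0"
    by simp
  have vars_t: "vars (t g * g0 * g) \<subseteq> V" if "g \<in> F - {g0}" for g
    using that g0(1) t(3) V(1,2) by (intro vars_mult_subset) auto
  have "mons_le d (c' g * g) \<and> vars (c' g * g) \<subseteq> V" if "g \<in> F" for g
  proof (cases "g = g0")
    case True
    show ?thesis
      unfolding True c'_g0 using bnd V(3) g0(1) t(1) vars_t
      by (intro conjI mons_le_add mons_le_sum vars_add_subset vars_sum_subset) auto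
  next
    case False
    show ?thesis
      unfolding c'_other[OF False] using bnd V(3) t(1) vars_t that False
      by (intro conjI mons_le_diff vars_diff_subset) auto
  qed
  moreover have "Poly_Mapping.lookup (c' g * g) d = 0" if "g \<in> F" for g
    using zero zero0 that by (cases "g = g0") auto
  ultimately show ?thesis
    using that[of c'] sum_eq mons_le_strict by blast
qed

lemma reduce_top_mon:
  fixes F :: "'a::field mpoly set" and c :: "'a mpoly \<Rightarrow> 'a mpoly"
  assumes fin: "finite F" and nz: "0 \<notin> F"
    and cop: "\<And>g h. g \<in> F \<Longrightarrow> h \<in> F \<Longrightarrow> g \<noteq> h \<Longrightarrow>
      Poly_Mapping.keys (lead_mon g) \<inter> Poly_Mapping.keys (lead_mon h) = {}"
    and bnd: "\<And>g. g \<in> F \<Longrightarrow> mons_le d (c g * g)"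
    and top: "Poly_Mapping.lookup (\<Sum>g\<in>F. c g * g) d = 0"
    and V: "Poly_Mapping.keys d \<subseteq> V" "\<And>g. g \<in> F \<Longrightarrow> vars g \<subseteq> V"
      "\<And>g. g \<in> F \<Longrightarrow> vars (c g * g) \<subseteq> V"
  obtains c' where "(\<Sum>g\<in>F. c' g * g) = (\<Sum>g\<in>F. c g * g)"
    and "\<And>g a. g \<in> F \<Longrightarrow> a \<in> Poly_Mapping.keys (c' g * g) \<Longrightarrow> grevlex_gt d a"
    and "\<And>g. g \<in> F \<Longrightarrow> vars (c' g * g) \<subseteq> V"
proof (cases "\<exists>g0\<in>F. Poly_Mapping.lookup (c g0 * g0) d \<noteq> 0")
  case True
  then obtain g0 where g0: "g0 \<in> F" "Poly_Mapping.lookup (c g0 * g0) d \<noteq> 0"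
    by blast
  have "g0 \<noteq> 0"
    using g0(1) nz by blast
  moreover have "mon_dvd (lead_mon g0) d"
    using lead_mon_factor_dvd[OF bnd g0(2)] g0(1) .
  ultimately show ?thesis
    using reduce_top_mon_at[OF fin g0(1) _ _ cop bnd top V] that g0(1) by blast
next
  case False
  show ?thesis
  proof (rule that[of c])
    fix g a assume "g \<in> F" "a \<in> Poly_Mapping.keys (c g * g)"
    then show "grevlex_gt d a"
      using False bnd mons_le_strict by blast
  qed (simp_all add: V(3))
qed

lemma coprime_lead_mons_descent:
  fixes F :: "'a::field mpoly set"
  assumes fin: "finite F" and nz: "0 \<notin> F"
    and cop: "\<And>g h. g \<in> F \<Longrightarrow> h \<in> F \<Longrightarrow> g \<noteq> h \<Longrightarrow>
      Poly_Mapping.keys (lead_mon g) \<inter> Poly_Mapping.keys (lead_mon h) = {}"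
    and V: "finite V" "\<And>g. g \<in> F \<Longrightarrow> vars g \<subseteq> V"
    and "f \<noteq> 0"
  shows "f = (\<Sum>g\<in>F. c g * g) \<Longrightarrow> (\<And>g. g \<in> F \<Longrightarrow> mons_le d (c g * g)) \<Longrightarrow>
    (\<And>g. g \<in> F \<Longrightarrow> vars (c g * g) \<subseteq> V) \<Longrightarrow> Poly_Mapping.keys d \<subseteq> V \<Longrightarrow>
    \<exists>g\<in>F. mon_dvd (lead_mon g) (lead_mon f)"
  using wf_grevlex_vars[OF V(1)]
proof (induction d arbitrary: c rule: wf_induct_rule)
  case (less d c)
  show ?case
  proof (cases "Poly_Mapping.lookup f d = 0")
    case False
    then obtain g where g: "g \<in> F" "Poly_Mapping.lookup (c g * g) d \<noteq> 0"
      using less.prems(1) by (auto simp: lookup_sum elim: sum.not_neutral_contains_not_neutral)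
    have "mons_le d f"
      unfolding less.prems(1) using less.prems(2) by (rule mons_le_sum)
    then have "lead_mon f = d"
      using False by (rule lead_mon_eq_if_mons_le)
    then show ?thesis
      using g less.prems(2) lead_mon_factor_dvd by blast
  next
    case True
    then have "Poly_Mapping.lookup (\<Sum>g\<in>F. c g * g) d = 0"
      using less.prems(1) by simp
    then obtain c' where c': "(\<Sum>g\<in>F. c' g * g) = (\<Sum>g\<in>F. c g * g)"
      "\<And>g a. g \<in> F \<Longrightarrow> a \<in> Poly_Mapping.keys (c' g * g) \<Longrightarrow> grevlex_gt d a"
      "\<And>g. g \<in> F \<Longrightarrow> vars (c' g * g) \<subseteq> V"
      using reduce_top_mon[OF fin nz cop less.prems(2) _ less.prems(4) V(2) less.prems(3)] by blast
    have "(\<Sum>g\<in>F. c' g * g) \<noteq> 0"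
      using c'(1) less.prems(1) \<open>f \<noteq> 0\<close> by simp
    from max_mon_exists[OF fin this] obtain d' g1 where d': "g1 \<in> F" "d' \<in> Poly_Mapping.keys (c' g1 * g1)"
      "\<And>h. h \<in> F \<Longrightarrow> mons_le d' (c' h * h)"
      by blast
    have "Poly_Mapping.keys d' \<subseteq> V"
      using d'(1,2) c'(3) unfolding vars_def by blast
    moreover have "grevlex_gt d d'"
      using c'(2) d'(1,2) by blast
    ultimately show ?thesis
      using less.IH[of d' c'] c'(1,3) d'(3) less.prems(1) by simp
  qed
qed

theorem groebner_basis_if_coprime_lead_mons:
  fixes G :: "'a::field mpoly set"
  assumes nz: "0 \<notin> G"
    and cop: "\<And>g h. g \<in> G \<Longrightarrow> h \<in> G \<Longrightarrow> g \<noteq> h \<Longrightarrow>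
      Poly_Mapping.keys (lead_mon g) \<inter> Poly_Mapping.keys (lead_mon h) = {}"
  shows "is_groebner_basis G (ideal_gen G)"
  unfolding is_groebner_basis_def
proof (intro conjI ballI impI subsetI)
  fix g assume "g \<in> G"
  then show "g \<in> ideal_gen G"
    unfolding ideal_gen_def by (intro CollectI exI[of _ "{g}"] exI[of _ "\<lambda>_. 1"]) auto
next
  fix f assume "f \<in> ideal_gen G" "f \<noteq> 0"
  then obtain F c where F: "finite F" "F \<subseteq> G" and f: "f = (\<Sum>g\<in>F. c g * g)"
    unfolding ideal_gen_def by blast
  define V where "V = (\<Union>g\<in>F. vars g \<union> vars (c g * g))"
  have "(\<Sum>g\<in>F. c g * g) \<noteq> 0"
    using f \<open>f \<noteq> 0\<close> by simp
  from max_mon_exists[OF F(1) this] obtain d g1 where d: "g1 \<in> F" "d \<in> Poly_Mapping.keys (c g1 * g1)"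
    "\<And>h. h \<in> F \<Longrightarrow> mons_le d (c h * h)"
    by blast
  have "0 \<notin> F"
    using nz F(2) by blast
  moreover have "Poly_Mapping.keys (lead_mon g) \<inter> Poly_Mapping.keys (lead_mon h) = {}"
    if "g \<in> F" "h \<in> F" "g \<noteq> h" for g h
    using cop F(2) that by blast
  moreover have "finite V"
    using F(1) by (simp add: V_def)
  moreover have "Poly_Mapping.keys d \<subseteq> V"
    using d(1,2) unfolding V_def vars_def by blast
  ultimately have "\<exists>g\<in>F. mon_dvd (lead_mon g) (lead_mon f)"
    using F(1) \<open>f \<noteq> 0\<close> f d(3) coprime_lead_mons_descent[of F V f c d] by (auto simp: V_def)
  then show "\<exists>g\<in>G. mon_dvd (lead_mon g) (lead_mon f)"
    using F(2) by blast
qed (use nz in auto)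

section \<open>The terms of \<open>det X(t)\<close>\<close>

definition perm_mon :: "nat \<Rightarrow> (nat \<Rightarrow> nat) \<Rightarrow> (nat \<Rightarrow> nat) \<Rightarrow> monom" where
  "perm_mon m p l = (\<Sum>i\<in>{1..m}. Poly_Mapping.single (l i, i, p i) 1)"

lemma lookup_perm_mon:
  "Poly_Mapping.lookup (perm_mon m p l) (a, i, j) = (if i \<in> {1..m} \<and> a = l i \<and> j = p i then 1 else 0)"
proof -
  have "Poly_Mapping.lookup (perm_mon m p l) (a, i, j) =
      (\<Sum>i'\<in>{1..m}. if i' = i then (if a = l i \<and> j = p i then 1 else 0) else 0)"
    unfolding perm_mon_def lookup_sum by (intro sum.cong refl) (auto simp: lookup_single when_def)
  then show ?thesis
    by (simp add: sum.delta')
qed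

lemma lookup_perm_mon_row: "i \<in> {1..m} \<Longrightarrow> Poly_Mapping.lookup (perm_mon m p l) (l i, i, p i) = 1"
  by (simp add: lookup_perm_mon)

lemma lookup_perm_mon_nonzero:
  "Poly_Mapping.lookup (perm_mon m p l) (a, i, j) \<noteq> 0 \<Longrightarrow> i \<in> {1..m} \<and> a = l i \<and> j = p i"
  by (simp add: lookup_perm_mon split: if_splits)

lemma keys_perm_mon: "Poly_Mapping.keys (perm_mon m p l) = (\<lambda>i. (l i, i, p i)) ` {1..m}"
proof (intro set_eqI iffI)
  fix v assume v: "v \<in> Poly_Mapping.keys (perm_mon m p l)"
  obtain a i j where v_eq: "v = (a, i, j)"
    by (cases v)
  have "Poly_Mapping.lookup (perm_mon m p l) (a, i, j) \<noteq> 0"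
    using v by (simp add: v_eq in_keys_iff)
  then have "i \<in> {1..m}" "v = (l i, i, p i)"
    using v_eq lookup_perm_mon_nonzero by blast+
  then show "v \<in> (\<lambda>i. (l i, i, p i)) ` {1..m}"
    by blast
qed (auto simp: in_keys_iff lookup_perm_mon_row)

lemma mdeg_perm_mon: "mdeg (perm_mon m p l) = m"
  by (simp add: perm_mon_def mdeg_sum)

lemma perm_mon_eqD:
  assumes "perm_mon m p l = perm_mon m p' l'" "i \<in> {1..m}"
  shows "l i = l' i \<and> p i = p' i"
  using lookup_perm_mon_row[OF assms(2), of p l] lookup_perm_mon_nonzero[of m p' l' "l i" i "p i"]
  by (simp add: assms(1))

lemma prod_monom:
  fixes c :: "'b \<Rightarrow> 'a::comm_semiring_1"
  shows "finite A \<Longrightarrow> (\<Prod>i\<in>A. monom (c i) (n i)) = monom (\<Prod>i\<in>A. c i) (\<Sum>i\<in>A. n i)"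
  by (induction A rule: finite_induct) (simp_all add: mult_monom monom_0 one_pCons)

lemma prod_single:
  fixes b :: "'b \<Rightarrow> 'a::comm_semiring_1"
  shows "finite A \<Longrightarrow> (\<Prod>i\<in>A. Poly_Mapping.single (a i) (b i)) =
    Poly_Mapping.single (\<Sum>i\<in>A. a i) (\<Prod>i\<in>A. b i)"
  by (induction A rule: finite_induct) (simp_all add: mult_single)

definition det_terms :: "nat \<Rightarrow> nat \<Rightarrow> nat \<Rightarrow> ((nat \<Rightarrow> nat) \<times> (nat \<Rightarrow> nat)) set" where
  "det_terms m k q = {(p, l). p permutes {1..m} \<and> l \<in> {1..m} \<rightarrow>\<^sub>E {..<k} \<and> (\<Sum>i\<in>{1..m}. l i) = q}"

lemma finite_det_terms: "finite (det_terms m k q)"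
  by (rule finite_subset[of _ "{p. p permutes {1..m}} \<times> ({1..m} \<rightarrow>\<^sub>E {..<k})"])
    (auto simp: det_terms_def finite_permutations finite_PiE)

lemma dcoef_eq_sum:
  "(dcoef m k q :: 'a::comm_ring_1 mpoly) =
    (\<Sum>x\<in>det_terms m k q. Poly_Mapping.single (perm_mon m (fst x) (snd x)) (of_int (sign (fst x))))"
proof -
  define P where "P = {p. p permutes {1..m}}"
  define L where "L = {1..m} \<rightarrow>\<^sub>E {..<k}"
  have "(\<Prod>i\<in>{1..m}. xt k i (p i) :: 'a mpoly poly) =
      (\<Sum>l\<in>L. monom (Poly_Mapping.single (perm_mon m p l) 1) (\<Sum>i\<in>{1..m}. l i))" for p
  proof -
    have "(\<Prod>i\<in>{1..m}. xt k i (p i) :: 'a mpoly poly) =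
        (\<Sum>l\<in>L. \<Prod>i\<in>{1..m}. monom (Xvar (l i) i (p i)) (l i))"
      unfolding xt_def L_def by (rule prod_sum_PiE) auto
    then show ?thesis
      by (simp add: prod_monom Xvar_def perm_mon_def prod_single)
  qed
  moreover have "(of_int (sign p) :: 'a mpoly poly) * monom (Poly_Mapping.single T 1) n =
      monom (Poly_Mapping.single T (of_int (sign p))) n" for p :: "nat \<Rightarrow> nat" and T n
    by (simp add: of_int_poly monom_0[symmetric] mult_monom mult_single flip: single_of_int)
  ultimately have "(dcoef m k q :: 'a mpoly) = (\<Sum>p\<in>P. \<Sum>l\<in>L.
      if (\<Sum>i\<in>{1..m}. l i) = q then Poly_Mapping.single (perm_mon m p l) (of_int (sign p)) else 0)"
    by (simp add: dcoef_def detX_def P_def sum_distrib_left coeff_sum)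
  also have "\<dots> = (\<Sum>x\<in>P \<times> L.
      if (\<Sum>i\<in>{1..m}. snd x i) = q then Poly_Mapping.single (perm_mon m (fst x) (snd x)) (of_int (sign (fst x))) else 0)"
    by (simp add: sum.cartesian_product case_prod_beta)
  also have "\<dots> = (\<Sum>x\<in>det_terms m k q. Poly_Mapping.single (perm_mon m (fst x) (snd x)) (of_int (sign (fst x))))"
  proof -
    have "det_terms m k q = {x \<in> P \<times> L. (\<Sum>i\<in>{1..m}. snd x i) = q}"
      by (auto simp: det_terms_def P_def L_def)
    moreover have "finite (P \<times> L)"
      by (simp add: P_def L_def finite_permutations finite_PiE)
    ultimately show ?thesis
      by (simp add: sum.inter_filter)
  qed
  finally show ?thesis .
qed

lemma lead_mon_sum_single:
  fixes c :: "'b \<Rightarrow> 'a::comm_monoid_add"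
  assumes "finite A" "x0 \<in> A" "c x0 \<noteq> 0"
    and gt: "\<And>x. x \<in> A \<Longrightarrow> x \<noteq> x0 \<Longrightarrow> grevlex_gt (T x0) (T x)"
  shows "(\<Sum>x\<in>A. Poly_Mapping.single (T x) (c x)) \<noteq> 0"
    and "lead_mon (\<Sum>x\<in>A. Poly_Mapping.single (T x) (c x)) = T x0"
proof -
  let ?f = "\<Sum>x\<in>A. Poly_Mapping.single (T x) (c x)"
  have "Poly_Mapping.lookup (Poly_Mapping.single (T x) (c x)) (T x0) = (if x = x0 then c x else 0)"
    if "x \<in> A" for x
  proof (cases "x = x0")
    case False
    then have "T x \<noteq> T x0"
      using gt[OF that] grevlex_gt_irrefl by metis
    then show ?thesis
      using False by (simp add: lookup_single_not_eq)
  qed simp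
  then have "Poly_Mapping.lookup ?f (T x0) = (\<Sum>x\<in>A. if x = x0 then c x else 0)"
    unfolding lookup_sum by (rule sum.cong[OF refl])
  then have top: "Poly_Mapping.lookup ?f (T x0) = c x0"
    using assms(1,2) by (simp add: sum.delta')
  then show "?f \<noteq> 0"
    using assms(3) by auto
  have "grevlex_ge (T x0) a" if "a \<in> Poly_Mapping.keys ?f" for a
  proof -
    obtain x where "x \<in> A" "a \<in> Poly_Mapping.keys (Poly_Mapping.single (T x) (c x))"
      using \<open>a \<in> Poly_Mapping.keys ?f\<close> keys_sum[of "\<lambda>x. Poly_Mapping.single (T x) (c x)" A] by blast
    then have "x \<in> A" "a = T x"
      by (simp_all split: if_splits)
    then show ?thesis
      using gt by (cases "x = x0") (auto simp: grevlex_ge_def)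
  qed
  then show "lead_mon ?f = T x0"
    using top assms(3) by (intro lead_mon_eqI) (auto simp: in_keys_iff)
qed

lemma perm_mon_levels_eq:
  assumes sum_eq: "(\<Sum>i\<in>{1..m}. l i) = (\<Sum>i\<in>{1..m}. l0 i)"
    and mono: "\<And>i j. i \<in> {1..m} \<Longrightarrow> j \<in> {1..m} \<Longrightarrow> i \<le> j \<Longrightarrow> l0 i \<le> l0 j"
    and step: "\<And>i j. i \<in> {1..m} \<Longrightarrow> j \<in> {1..m} \<Longrightarrow> l0 j \<le> l0 i + 1"
    and i0: "i0 \<in> {1..m}"
    and below: "\<And>i. i \<in> {1..m} \<Longrightarrow> var_gt (l0 i0, i0, j0) (l i, i, p i) \<Longrightarrow> l i = l0 i"
    and i: "i \<in> {1..m}"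
  shows "l i = l0 i"
proof -
  have ge: "l0 i \<le> l i" if i: "i \<in> {1..m}" for i
  proof (rule ccontr)
    assume "\<not> l0 i \<le> l i"
    then have lt: "l i < l0 i"
      by simp
    have "var_gt (l0 i0, i0, j0) (l i, i, p i)"
    proof (cases "l i < l0 i0")
      case False
      then have "l i = l0 i0" "l0 i0 < l0 i"
        using lt step[OF i0 i] by auto
      moreover from this(2) have "i0 < i"
        using mono[OF i i0] by linarith
      ultimately show ?thesis
        by (simp add: var_gt_def)
    qed (simp add: var_gt_def)
    then show False
      using below[OF i] lt by simp
  qed
  show ?thesis
  proof (rule ccontr)
    assume "l i \<noteq> l0 i"
    then have "\<exists>a\<in>{1..m}. l0 a < l a"
      using ge[OF i] i by (intro bexI[of _ i]) auto
    then have "(\<Sum>i\<in>{1..m}. l0 i) < (\<Sum>i\<in>{1..m}. l i)"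
      using ge by (intro sum_strict_mono_ex1) auto
    then show False
      using sum_eq by simp
  qed
qed

text \<open>Let \<open>u\<close> be the least variable at which the two monomials differ and suppose it occurs in
  the first one, in row \<open>i\<^sub>0\<close>. The rows of the second monomial below \<open>u\<close> agree with the first one;
  the conditions on \<open>l\<^sub>0\<close> then force equal levels in all rows, and the cover condition yields a
  row \<open>i' \<noteq> i\<^sub>0\<close> with \<open>p i' = p i\<^sub>0\<close>, contradicting injectivity of \<open>p\<close>.\<close>
lemma perm_mon_grevlex_gt:
  assumes p: "p permutes {1..m}"
    and sum_eq: "(\<Sum>i\<in>{1..m}. l i) = (\<Sum>i\<in>{1..m}. l0 i)"
    and mono: "\<And>i j. i \<in> {1..m} \<Longrightarrow> j \<in> {1..m} \<Longrightarrow> i \<le> j \<Longrightarrow> l0 i \<le> l0 j"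
    and step: "\<And>i j. i \<in> {1..m} \<Longrightarrow> j \<in> {1..m} \<Longrightarrow> l0 j \<le> l0 i + 1"
    and cover: "\<And>i c. i \<in> {1..m} \<Longrightarrow> 1 \<le> c \<Longrightarrow> c < p0 i \<Longrightarrow>
      \<exists>i'\<in>{1..m}. p0 i' = c \<and> var_gt (l0 i, i, p0 i) (l0 i', i', p0 i')"
    and ne: "perm_mon m p l \<noteq> perm_mon m p0 l0"
  shows "grevlex_gt (perm_mon m p0 l0) (perm_mon m p l)"
proof -
  let ?S = "perm_mon m p0 l0" and ?T = "perm_mon m p l"
  obtain u where u: "Poly_Mapping.lookup ?S u \<noteq> Poly_Mapping.lookup ?T u"
    and below: "\<And>w. var_gt u w \<Longrightarrow> Poly_Mapping.lookup ?S w = Poly_Mapping.lookup ?T w"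
    using least_diff_var ne by metis
  have "Poly_Mapping.lookup ?S u < Poly_Mapping.lookup ?T u"
  proof (rule ccontr)
    assume "\<not> ?thesis"
    then have "Poly_Mapping.lookup ?S u \<noteq> 0" "Poly_Mapping.lookup ?T u = 0"
      using u by (cases u; simp add: lookup_perm_mon split: if_splits)+
    then obtain i0 where i0: "i0 \<in> {1..m}" and u_eq: "u = (l0 i0, i0, p0 i0)"
      using lookup_perm_mon_nonzero by (cases u) blast
    have agree: "l i = l0 i \<and> p i = p0 i" if "i \<in> {1..m}" "var_gt u (l i, i, p i)" for i
      using below[OF that(2)] lookup_perm_mon_row[OF that(1), of p l]
        lookup_perm_mon_nonzero[of m p0 l0 "l i" i "p i"] by simp
    have agree0: "l i = l0 i \<and> p i = p0 i" if "i \<in> {1..m}" "var_gt u (l0 i, i, p0 i)" for i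
      using below[OF that(2)] lookup_perm_mon_row[OF that(1), of p0 l0]
        lookup_perm_mon_nonzero[of m p l "l0 i" i "p0 i"] by simp
    have levels: "l i = l0 i" if "i \<in> {1..m}" for i
      using perm_mon_levels_eq[OF sum_eq mono step i0 _ that, of "p0 i0" p] agree u_eq by blast
    have "p i0 \<noteq> p0 i0"
      using \<open>Poly_Mapping.lookup ?T u = 0\<close> lookup_perm_mon_row[OF i0, of p l] levels[OF i0] u_eq
      by auto
    moreover have "\<not> p0 i0 < p i0"
    proof
      assume "p0 i0 < p i0"
      then have "var_gt u (l i0, i0, p i0)"
        using levels[OF i0] u_eq by (simp add: var_gt_def)
      then show False
        using agree[OF i0] \<open>p i0 \<noteq> p0 i0\<close> by blast
    qed
    moreover have "1 \<le> p i0"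
      using permutes_in_image[OF p] i0 by auto
    ultimately obtain i' where i': "i' \<in> {1..m}" "p0 i' = p i0" "var_gt u (l0 i', i', p0 i')"
      using cover[OF i0] u_eq by (metis linorder_neqE_nat)
    then have "p i' = p i0"
      using agree0 by metis
    moreover have "i' \<noteq> i0"
      using i'(2) \<open>p i0 \<noteq> p0 i0\<close> by auto
    ultimately show False
      using permutes_inj[OF p] by (meson injD)
  qed
  then show ?thesis
    unfolding grevlex_gt_def mdeg_perm_mon using below by blast
qed

section \<open>The leading monomial of \<open>d\<^sub>q\<close>\<close>

text \<open>Writing \<open>q = \<lambda> m + \<mu>\<close>, the leading term of \<open>d\<^sub>q\<close> takes \<open>t\<^sup>\<lambda>\<close> from the first \<open>m - \<mu>\<close> rows
  and \<open>t\<^sup>\<lambda>\<^sup>+\<^sup>1\<close> from the others, and in each of the two diagonal blocks of rows and columns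
  it uses the anti-diagonal.\<close>
definition lm_level :: "nat \<Rightarrow> nat \<Rightarrow> nat \<Rightarrow> nat" where
  "lm_level m q i = (if i \<le> m - q mod m then q div m else q div m + 1)"

definition lm_perm :: "nat \<Rightarrow> nat \<Rightarrow> nat \<Rightarrow> nat" where
  "lm_perm m q i = (if i \<in> {1..m} then if i \<le> m - q mod m then m - q mod m + 1 - i
      else 2 * m - q mod m + 1 - i else i)"

lemma lm_level_mono: "i \<le> j \<Longrightarrow> lm_level m q i \<le> lm_level m q j"
  by (auto simp: lm_level_def)

lemma lm_level_step: "lm_level m q j \<le> lm_level m q i + 1"
  by (auto simp: lm_level_def)

lemma lm_level_le:
  assumes "m \<ge> 1" "i \<le> m"
  shows "lm_level m q i \<le> q"
proof (cases "i \<le> m - q mod m")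
  case True
  then show ?thesis
    by (simp add: lm_level_def div_le_dividend)
next
  case False
  then have "1 \<le> q mod m"
    using assms(2) by arith
  moreover have "q div m \<le> q div m * m"
    using assms(1) by simp
  moreover have "lm_level m q i = q div m + 1"
    using False by (simp add: lm_level_def)
  moreover have "q div m * m + q mod m = q"
    by (rule div_mult_mod_eq)
  ultimately show ?thesis
    by linarith
qed

lemma sum_split_at:
  fixes f :: "nat \<Rightarrow> 'a::comm_monoid_add"
  assumes "\<mu> \<le> m"
  shows "(\<Sum>i\<in>{1..m}. f i) = (\<Sum>i\<in>{1..m - \<mu>}. f i) + (\<Sum>i\<in>{m - \<mu> + 1..m}. f i)"
  using sum.ub_add_nat[of 1 "m - \<mu>" f \<mu>] assms by simp

lemma lm_level_sum:
  assumes "m \<ge> 1"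
  shows "(\<Sum>i\<in>{1..m}. lm_level m q i) = q"
proof -
  let ?mu = "q mod m" and ?lam = "q div m"
  have \<mu>: "?mu < m"
    using assms by simp
  have "(\<Sum>i\<in>{1..m}. lm_level m q i) = (\<Sum>i\<in>{1..m - ?mu}. ?lam) + (\<Sum>i\<in>{m - ?mu + 1..m}. ?lam + 1)"
    unfolding sum_split_at[OF less_imp_le[OF \<mu>]]
    by (intro arg_cong2[where f = "(+)"] sum.cong) (auto simp: lm_level_def)
  also have "\<dots> = m * ?lam + ?mu"
    using \<mu> by (simp add: algebra_simps diff_mult_distrib)
  finally show ?thesis
    by simp
qed

lemma lm_perm_outside: "i \<notin> {1..m} \<Longrightarrow> lm_perm m q i = i"
  unfolding lm_perm_def by (simp only: if_False)

lemma lm_perm_involution: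
  assumes "m \<ge> 1"
  shows "lm_perm m q (lm_perm m q i) = i"
proof -
  have "q mod m < m"
    using assms by simp
  then show ?thesis
    by (simp add: lm_perm_def split: if_splits; arith)
qed

lemma lm_perm_permutes:
  assumes "m \<ge> 1"
  shows "lm_perm m q permutes {1..m}"
  unfolding permutes_def
proof (intro conjI allI impI)
  fix y
  show "\<exists>!x. lm_perm m q x = y"
    by (metis lm_perm_involution[OF assms])
qed (rule lm_perm_outside)

lemma lm_perm_cover:
  assumes "m \<ge> 1" "i \<in> {1..m}" "1 \<le> c" "c < lm_perm m q i"
  shows "\<exists>i'\<in>{1..m}. lm_perm m q i' = c \<and>
    var_gt (lm_level m q i, i, lm_perm m q i) (lm_level m q i', i', lm_perm m q i')"
proof -
  define r where "r = m - q mod m"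
  have "r \<le> m"
    by (simp add: r_def)
  have "q mod m < m"
    using assms(1) by simp
  then have perm: "lm_perm m q j = (if j \<le> r then r + 1 - j else m + r + 1 - j)"
    and level: "lm_level m q j = (if j \<le> r then q div m else q div m + 1)" if "j \<in> {1..m}" for j
    using that by (auto simp: lm_perm_def lm_level_def r_def)
  have i: "1 \<le> i" "i \<le> m"
    using assms(2) by simp_all
  consider (first) "i \<le> r" "c \<le> r" | (cross) "\<not> i \<le> r" "c \<le> r" | (second) "\<not> i \<le> r" "\<not> c \<le> r"
    using perm[OF assms(2)] assms(4) by fastforce
  then obtain i' where "i' \<in> {1..m}" "lm_perm m q i' = c"
    "lm_level m q i' < lm_level m q i \<or> lm_level m q i' = lm_level m q i \<and> i < i'"
  proof cases
    case first
    then have "r + 1 - c \<in> {1..m}" "r + 1 - c \<le> r" "i < r + 1 - c"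
      using perm[OF assms(2)] assms(3,4) i \<open>r \<le> m\<close> by auto
    then show ?thesis
      using that[of "r + 1 - c"] perm level assms(2) first(1) assms(3) by auto
  next
    case cross
    then have "r + 1 - c \<in> {1..m}" "r + 1 - c \<le> r"
      using assms(3) \<open>r \<le> m\<close> by auto
    then show ?thesis
      using that[of "r + 1 - c"] perm level assms(2) cross assms(3) by auto
  next
    case second
    then have "m + r + 1 - c \<in> {1..m}" "\<not> m + r + 1 - c \<le> r" "i < m + r + 1 - c"
      using perm[OF assms(2)] assms(4) i by auto
    then show ?thesis
      using that[of "m + r + 1 - c"] perm level assms(2) second by auto
  qed
  then show ?thesis
    by (auto simp: var_gt_def)
qed

lemma perm_mon_lm:
  assumes "m \<ge> 1"
  shows "perm_mon m (lm_perm m q) (lm_level m q) = lm_formula m q"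
proof -
  have "q mod m \<le> m"
    using assms by (simp add: less_imp_le)
  then show ?thesis
    unfolding perm_mon_def lm_formula_def Let_def sum_split_at[OF \<open>q mod m \<le> m\<close>]
    by (intro arg_cong2[where f = "(+)"] sum.cong) (auto simp: lm_level_def lm_perm_def)
qed

lemma lm_formula_keys:
  assumes "m \<ge> 1" "(l, i, j) \<in> Poly_Mapping.keys (lm_formula m q)"
  shows "q + i + j = m * (l + 1) + 1"
proof -
  have "i \<in> {1..m}" "l = lm_level m q i" "j = lm_perm m q i"
    using assms keys_perm_mon[of m "lm_perm m q" "lm_level m q"] by (auto simp: perm_mon_lm)
  moreover have "m * (q div m) + q mod m = q" "q mod m < m"
    using assms(1) by simp_all
  ultimately show ?thesis
    by (simp add: lm_level_def lm_perm_def split: if_splits; arith)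
qed

lemma lm_formula_keys_disjoint:
  assumes "m \<ge> 1" "q \<noteq> q'"
  shows "Poly_Mapping.keys (lm_formula m q) \<inter> Poly_Mapping.keys (lm_formula m q') = {}"
proof (rule equals0I)
  fix v assume v: "v \<in> Poly_Mapping.keys (lm_formula m q) \<inter> Poly_Mapping.keys (lm_formula m q')"
  obtain l i j where v_eq: "v = (l, i, j)"
    by (cases v)
  have "q + i + j = m * (l + 1) + 1"
    using v unfolding v_eq by (intro lm_formula_keys[OF assms(1)]) simp
  moreover have "q' + i + j = m * (l + 1) + 1"
    using v unfolding v_eq by (intro lm_formula_keys[OF assms(1)]) simp
  ultimately show False
    using assms(2) by simp
qed

lemma perm_mon_eq_lm_formulaD:
  assumes "m \<ge> 1" "p permutes {1..m}" "l \<in> {1..m} \<rightarrow>\<^sub>E {..<k}"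
    and eq: "perm_mon m p l = lm_formula m q"
  shows "p = lm_perm m q" and "l = restrict (lm_level m q) {1..m}"
proof -
  have eq': "perm_mon m p l = perm_mon m (lm_perm m q) (lm_level m q)"
    using eq perm_mon_lm[OF assms(1)] by simp
  have rows: "l i = lm_level m q i \<and> p i = lm_perm m q i" if "i \<in> {1..m}" for i
    using perm_mon_eqD[OF eq' that] .
  show "p = lm_perm m q"
  proof
    fix i
    show "p i = lm_perm m q i"
    proof (cases "i \<in> {1..m}")
      case True
      then show ?thesis
        using rows[OF True] by simp
    next
      case False
      then show ?thesis
        using permutes_not_in[OF assms(2) False] lm_perm_outside[OF False] by simp
    qed
  qed
  show "l = restrict (lm_level m q) {1..m}"
  proof
    fix i
    show "l i = restrict (lm_level m q) {1..m} i"
    proof (cases "i \<in> {1..m}")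
      case True
      then show ?thesis
        using rows[OF True] by simp
    next
      case False
      then show ?thesis
        using PiE_arb[OF assms(3) False] False by auto
    qed
  qed
qed

lemma lead_mon_dcoef:
  assumes m: "m \<ge> 1" and q: "q < k"
  shows "(dcoef m k q :: 'a::comm_ring_1 mpoly) \<noteq> 0"
    and "lead_mon (dcoef m k q :: 'a mpoly) = lm_formula m q"
proof -
  define x0 where "x0 = (lm_perm m q, restrict (lm_level m q) {1..m})"
  have perm_mon_x0: "perm_mon m (fst x0) (snd x0) = lm_formula m q"
    unfolding x0_def perm_mon_lm[OF m, symmetric] perm_mon_def by (intro sum.cong) auto
  have "lm_level m q i < k" if "i \<in> {1..m}" for i
    using lm_level_le[OF m, of i q] that q by simp
  then have "restrict (lm_level m q) {1..m} \<in> {1..m} \<rightarrow>\<^sub>E {..<k}"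
    by (simp add: restrict_PiE_iff)
  moreover have "(\<Sum>i\<in>{1..m}. restrict (lm_level m q) {1..m} i) = q"
    using lm_level_sum[OF m] by (metis (no_types, lifting) restrict_apply' sum.cong)
  ultimately have x0: "x0 \<in> det_terms m k q"
    using lm_perm_permutes[OF m] by (simp add: det_terms_def x0_def)
  have gt: "grevlex_gt (perm_mon m (fst x0) (snd x0)) (perm_mon m (fst x) (snd x))"
    if "x \<in> det_terms m k q" "x \<noteq> x0" for x
  proof -
    obtain p l where x_eq: "x = (p, l)"
      by (cases x)
    then have p: "p permutes {1..m}" and l: "l \<in> {1..m} \<rightarrow>\<^sub>E {..<k}" "(\<Sum>i\<in>{1..m}. l i) = q"
      using that(1) by (auto simp: det_terms_def)
    have "perm_mon m p l \<noteq> lm_formula m q"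
    proof
      assume "perm_mon m p l = lm_formula m q"
      then have "x = x0"
        using perm_mon_eq_lm_formulaD[OF m p l(1)] x_eq by (simp add: x0_def)
      with that(2) show False ..
    qed
    then have ne: "perm_mon m p l \<noteq> perm_mon m (lm_perm m q) (lm_level m q)"
      by (simp add: perm_mon_lm[OF m])
    have sum_eq: "(\<Sum>i\<in>{1..m}. l i) = (\<Sum>i\<in>{1..m}. lm_level m q i)"
      using l(2) lm_level_sum[OF m] by simp
    have mono: "\<And>i j. i \<in> {1..m} \<Longrightarrow> j \<in> {1..m} \<Longrightarrow> i \<le> j \<Longrightarrow> lm_level m q i \<le> lm_level m q j"
      by (rule lm_level_mono)
    have step: "\<And>i j. i \<in> {1..m} \<Longrightarrow> j \<in> {1..m} \<Longrightarrow> lm_level m q j \<le> lm_level m q i + 1"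
      by (rule lm_level_step)
    have "grevlex_gt (perm_mon m (lm_perm m q) (lm_level m q)) (perm_mon m p l)"
      by (rule perm_mon_grevlex_gt[OF p sum_eq mono step lm_perm_cover[OF m] ne])
    then show ?thesis
      by (simp add: x_eq perm_mon_x0 perm_mon_lm[OF m])
  qed
  have sign: "(of_int (sign (fst x0)) :: 'a) \<noteq> 0"
    by (simp add: sign_def)
  note lead = lead_mon_sum_single[where T = "\<lambda>x. perm_mon m (fst x) (snd x)"
      and c = "\<lambda>x. of_int (sign (fst x))", OF finite_det_terms x0 sign gt]
  show "(dcoef m k q :: 'a mpoly) \<noteq> 0" "lead_mon (dcoef m k q :: 'a mpoly) = lm_formula m q"
    using lead by (simp_all add: dcoef_eq_sum perm_mon_x0)
qed

theorem theorem3p2: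
  fixes m k :: nat
  assumes "alg_closed_field TYPE('a::field)"
    and "m \<ge> 1" and "k \<ge> 1"
  shows "is_groebner_basis {dcoef m k q :: 'a mpoly | q. q < k} (Ideal_mk m k)
    \<and> (\<forall>q<k. lead_mon (dcoef m k q :: 'a mpoly) = lm_formula m q)
    \<and> (\<forall>q<k. \<forall>q'<k. q \<noteq> q' \<longrightarrow>
         Poly_Mapping.keys (lead_mon (dcoef m k q :: 'a mpoly)) \<inter> Poly_Mapping.keys (lead_mon (dcoef m k q' :: 'a mpoly)) = {})"
proof -
  have lead: "\<And>q. q < k \<Longrightarrow> lead_mon (dcoef m k q :: 'a mpoly) = lm_formula m q"
    and nonzero: "\<And>q. q < k \<Longrightarrow> (dcoef m k q :: 'a mpoly) \<noteq> 0"
    using lead_mon_dcoef[OF assms(2)] by blast+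
  have disjoint: "\<And>q q'. q < k \<Longrightarrow> q' < k \<Longrightarrow> q \<noteq> q' \<Longrightarrow>
      Poly_Mapping.keys (lead_mon (dcoef m k q :: 'a mpoly)) \<inter> Poly_Mapping.keys (lead_mon (dcoef m k q' :: 'a mpoly)) = {}"
    using lead lm_formula_keys_disjoint[OF assms(2)] by simp
  have "is_groebner_basis {dcoef m k q :: 'a mpoly | q. q < k} (Ideal_mk m k)"
    unfolding Ideal_mk_def
  proof (rule groebner_basis_if_coprime_lead_mons)
    show "0 \<notin> {dcoef m k q :: 'a mpoly | q. q < k}"
      using nonzero by force
    fix g h assume "g \<in> {dcoef m k q :: 'a mpoly | q. q < k}" "h \<in> {dcoef m k q :: 'a mpoly | q. q < k}" "g \<noteq> h"
    then obtain q q' where "q < k" "q' < k" "q \<noteq> q'" "g = dcoef m k q" "h = dcoef m k q'"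
      by auto
    then show "Poly_Mapping.keys (lead_mon g) \<inter> Poly_Mapping.keys (lead_mon h) = {}"
      using disjoint by simp
  qed
  then show ?thesis
    using lead disjoint by blast
qed

end
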